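(* Let $N\ge 1$ be the number of users, indexed $1,\dots,N$. For each user $i$ let $\mathbf{x}_i$ be an observed feature vector and let $\phi(\mathbf{x}_i,\ell)\in\mathbb{R}$ be given for $\ell\in\{0,1\}$. For each pair $i<j$ let $\mathbf{z}_{i,j}$ be an observed relationship vector (write $\mathbf{z}_{j,i}=\mathbf{z}_{i,j}$) and let $\psi(\mathbf{z}_{i,j},a,b)\in\mathbb{R}$ be given for $a,b\in\{0,1\}$, where $a$ refers to user $i$ and $b$ to user $j$. Assume: (i) if there is no observed relationship between users $i$ and $j$, then $\psi(\mathbf{z}_{i,j},a,b)=0$ for all $a,b\in\{0,1\}$; (ii) for every pair $i<j$, $\psi(\mathbf{z}_{i,j},1,1)=0\le \psi(\mathbf{z}_{i,j},0,0)\le \psi(\mathbf{z}_{i,j},0,1)$ and $\psi(\mathbf{z}_{i,j},0,0)\le \psi(\mathbf{z}_{i,j},1,0)$. Define the energy of a labeling $\mathbf{L}=(\ell_1,\dots,\ell_N)\in\{0,1\}^N$ by $$E(\mathbf{L})=\sum_{i=1}^N\phi(\mathbf{x}_i,\ell_i)+\sum_{i<j}\psi(\mathbf{z}_{i,j},\ell_i,\ell_j).$$ Define the Energy Graph as the directed graph with node set $\{s,t,u_1,\dots,u_N\}$ and edges with capacities: - for each $i$, an edge $(u_i,t)$ with capacity $\phi(\mathbf{x}_i,1)$; - for each $i$, an edge $(s,u_i)$ with capacity $\phi(\mathbf{x}_i,0)+\tfrac12\sum_{j\ne i}\psi(\mathbf{z}_{i,j},0,0)$; - for each pair $i<j$ with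 an observed relationship, edges $(u_i,u_j)$ with capacity $\psi(\mathbf{z}_{i,j},1,0)-\tfrac12\psi(\mathbf{z}_{i,j},0,0)$ and $(u_j,u_i)$ with capacity $\psi(\mathbf{z}_{i,j},0,1)-\tfrac12\psi(\mathbf{z}_{i,j},0,0)$. For a labeling $\mathbf{L}$, the $\mathbf{L}$-configuration cut is the $s$-$t$ cut $(S_{\mathbf{L}},T_{\mathbf{L}})$ with $S_{\mathbf{L}}=\{s\}\cup\{u_i:\ell_i=1\}$ and $T_{\mathbf{L}}=\{t\}\cup\{u_i:\ell_i=0\}$; its capacity is the sum of capacities of all edges directed from a node of $S_{\mathbf{L}}$ to a node of $T_{\mathbf{L}}$. Then for every $\mathbf{L}\in\{0,1\}^N$, $E(\mathbf{L})$ equals the capacity of the $\mathbf{L}$-configuration cut in the Energy Graph.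
   Context: This models classification of social media users as in a target location ($\ell_i=1$) or not ($\ell_i=0$); $\phi$ is the "profile energy" and $\psi$ the "link energy". An $s$-$t$ cut is a partition of the node set into $S\ni s$ and $T\ni t$. *)

theory Defs
  imports Complex_Main
begin

datatype node = Src | Snk | U nat

definition user_pairs :: "nat \<Rightarrow> (nat \<times> nat) set" where
  "user_pairs N = {(i, j). 1 \<le> i \<and> i < j \<and> j \<le> N}"

definition energy ::
  "('x \<Rightarrow> nat \<Rightarrow> real) \<Rightarrow> (nat \<Rightarrow> 'x) \<Rightarrow>
   ('z \<Rightarrow> nat \<Rightarrow> nat \<Rightarrow> real) \<Rightarrow> (nat \<Rightarrow> nat \<Rightarrow> 'z) \<Rightarrow>
   nat \<Rightarrow> (nat \<Rightarrow> nat) \<Rightarrow> real" where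
  "energy phi x psi z N L =
     (\<Sum>i=1..N. phi (x i) (L i)) +
     (\<Sum>(i, j)\<in>user_pairs N. psi (z i j) (L i) (L j))"

text \<open>Edge set of the Energy Graph; rel i j (for i<j) means an observed relationship.\<close>
definition energy_edges :: "nat \<Rightarrow> (nat \<Rightarrow> nat \<Rightarrow> bool) \<Rightarrow> (node \<times> node) set" where
  "energy_edges N rel =
     {(U i, Snk) | i. 1 \<le> i \<and> i \<le> N} \<union>
     {(Src, U i) | i. 1 \<le> i \<and> i \<le> N} \<union>
     {(U i, U j) | i j. (i, j) \<in> user_pairs N \<and> rel i j} \<union>
     {(U j, U i) | i j. (i, j) \<in> user_pairs N \<and> rel i j}"

text \<open>Capacities of the edges of the Energy Graph (values off the edge set are irrelevant).\<close>
fun energy_cap ::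
  "('x \<Rightarrow> nat \<Rightarrow> real) \<Rightarrow> (nat \<Rightarrow> 'x) \<Rightarrow>
   ('z \<Rightarrow> nat \<Rightarrow> nat \<Rightarrow> real) \<Rightarrow> (nat \<Rightarrow> nat \<Rightarrow> 'z) \<Rightarrow>
   nat \<Rightarrow> node \<times> node \<Rightarrow> real" where
  "energy_cap phi x psi z N (U i, Snk) = phi (x i) 1"
| "energy_cap phi x psi z N (Src, U i) =
     phi (x i) 0 + 1/2 * (\<Sum>j\<in>{1..N} - {i}. psi (z i j) 0 0)"
| "energy_cap phi x psi z N (U i, U j) =
     (if i < j then psi (z i j) 1 0 - 1/2 * psi (z i j) 0 0
      else psi (z j i) 0 1 - 1/2 * psi (z j i) 0 0)"
| "energy_cap phi x psi z N _ = 0"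

definition cut_S :: "nat \<Rightarrow> (nat \<Rightarrow> nat) \<Rightarrow> node set" where
  "cut_S N L = {Src} \<union> {U i | i. 1 \<le> i \<and> i \<le> N \<and> L i = 1}"

definition cut_T :: "nat \<Rightarrow> (nat \<Rightarrow> nat) \<Rightarrow> node set" where
  "cut_T N L = {Snk} \<union> {U i | i. 1 \<le> i \<and> i \<le> N \<and> L i = 0}"

definition cut_capacity ::
  "(node \<times> node) set \<Rightarrow> (node \<times> node \<Rightarrow> real) \<Rightarrow> node set \<Rightarrow> node set \<Rightarrow> real" where
  "cut_capacity E c S T = (\<Sum>e\<in>{e\<in>E. fst e \<in> S \<and> snd e \<in> T}. c e)"

end

theory Submission
  imports Defs
begin

text \<open>The source edges carry half of each pair's diagonal value psi(z,0,0), once from each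
  endpoint labelled 0, so a pair contributes psi(z,0,0) through the terminal edges exactly when
  both of its users are labelled 0; the user-user edges supply the rest of psi(z,a,b) for mixed
  labels, and psi(z,1,1) = 0 makes the remaining case vanish.\<close>

lemma finite_user_pairs: "finite (user_pairs N)"
  by (rule finite_subset[of _ "{1..N} \<times> {1..N}"]) (auto simp: user_pairs_def)

lemma sum_off_diagonal_user_pairs:
  fixes h :: "nat \<Rightarrow> nat \<Rightarrow> 'a::comm_monoid_add"
  shows "(\<Sum>i\<in>{1..N}. \<Sum>j\<in>{1..N} - {i}. h i j) = (\<Sum>(i, j)\<in>user_pairs N. h i j + h j i)"
proof -
  let ?swap = "\<lambda>(i, j). (j, i)"
  have "(\<Sum>i\<in>{1..N}. \<Sum>j\<in>{1..N} - {i}. h i j) = (\<Sum>(i, j)\<in>Sigma {1..N} (\<lambda>i. {1..N} - {i}). h i j)"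
    by (rule sum.Sigma) auto
  also have "Sigma {1..N} (\<lambda>i. {1..N} - {i}) = user_pairs N \<union> ?swap ` user_pairs N"
    by (auto simp: user_pairs_def image_iff)
  also have "(\<Sum>(i, j)\<in>user_pairs N \<union> ?swap ` user_pairs N. h i j)
      = (\<Sum>(i, j)\<in>user_pairs N. h i j) + (\<Sum>(i, j)\<in>?swap ` user_pairs N. h i j)"
    by (rule sum.union_disjoint) (auto simp: finite_user_pairs, auto simp: user_pairs_def)
  also have "(\<Sum>(i, j)\<in>?swap ` user_pairs N. h i j) = (\<Sum>(i, j)\<in>user_pairs N. h j i)"
    by (subst sum.reindex) (auto simp: inj_on_def case_prod_beta)
  finally show ?thesis
    by (simp add: sum.distrib case_prod_beta)
qed

lemma sum_image_filter:
  assumes "finite A" "inj_on f A"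
  shows "sum c (f ` {a\<in>A. P a}) = (\<Sum>a\<in>A. if P a then c (f a) else 0)"
  using assms by (simp add: sum.reindex inj_on_subset sum.inter_filter)

lemma cut_capacity_configuration:
  "cut_capacity (energy_edges N rel) c (cut_S N L) (cut_T N L) =
     (\<Sum>i=1..N. if L i = 0 then c (Src, U i) else 0) +
     (\<Sum>i=1..N. if L i = 1 then c (U i, Snk) else 0) +
     (\<Sum>(i, j)\<in>user_pairs N. if rel i j \<and> L i = 1 \<and> L j = 0 then c (U i, U j) else 0) +
     (\<Sum>(i, j)\<in>user_pairs N. if rel i j \<and> L i = 0 \<and> L j = 1 then c (U j, U i) else 0)"
proof -
  define A where "A = (\<lambda>i. (Src, U i)) ` {i\<in>{1..N}. L i = 0}"
  define B where "B = (\<lambda>i. (U i, Snk)) ` {i\<in>{1..N}. L i = 1}"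
  define C where "C = (\<lambda>(i, j). (U i, U j)) ` {(i, j)\<in>user_pairs N. rel i j \<and> L i = 1 \<and> L j = 0}"
  define D where "D = (\<lambda>(i, j). (U j, U i)) ` {(i, j)\<in>user_pairs N. rel i j \<and> L i = 0 \<and> L j = 1}"
  have crossing: "{e\<in>energy_edges N rel. fst e \<in> cut_S N L \<and> snd e \<in> cut_T N L} = A \<union> B \<union> C \<union> D"
    unfolding A_def B_def C_def D_def energy_edges_def cut_S_def cut_T_def
    by (auto simp: user_pairs_def image_iff)
  have finite_parts: "finite A" "finite B" "finite C" "finite D"
    unfolding A_def B_def C_def D_def
    by (auto intro: finite_subset[OF _ finite_user_pairs[of N]])
  have disjoint: "A \<inter> B = {}" "(A \<union> B) \<inter> C = {}" "(A \<union> B \<union> C) \<inter> D = {}"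
    unfolding A_def B_def C_def D_def by (auto simp: user_pairs_def)
  have pair_sum: "sum c ((\<lambda>(i, j). f i j) ` {(i, j)\<in>user_pairs N. P i j})
      = (\<Sum>(i, j)\<in>user_pairs N. if P i j then c (f i j) else 0)"
    if "inj_on (\<lambda>(i, j). f i j) (user_pairs N)" for f :: "nat \<Rightarrow> nat \<Rightarrow> node \<times> node" and P
    using sum_image_filter[OF finite_user_pairs that, of c "\<lambda>(i, j). P i j"]
    by (auto simp: case_prod_unfold intro!: sum.cong)
  have "sum c C = (\<Sum>(i, j)\<in>user_pairs N. if rel i j \<and> L i = 1 \<and> L j = 0 then c (U i, U j) else 0)"
    unfolding C_def by (rule pair_sum) (auto simp: inj_on_def)
  moreover have "sum c D = (\<Sum>(i, j)\<in>user_pairs N. if rel i j \<and> L i = 0 \<and> L j = 1 then c (U j, U i) else 0)"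
    unfolding D_def by (rule pair_sum) (auto simp: inj_on_def)
  moreover have "sum c A = (\<Sum>i=1..N. if L i = 0 then c (Src, U i) else 0)"
    unfolding A_def by (rule sum_image_filter) (auto simp: inj_on_def)
  moreover have "sum c B = (\<Sum>i=1..N. if L i = 1 then c (U i, Snk) else 0)"
    unfolding B_def by (rule sum_image_filter) (auto simp: inj_on_def)
  ultimately show ?thesis
    unfolding cut_capacity_def crossing
    using finite_parts disjoint by (simp add: sum.union_disjoint)
qed

lemma source_sink_edges_capacity:
  fixes phi :: "'x \<Rightarrow> nat \<Rightarrow> real" and psi :: "'z \<Rightarrow> nat \<Rightarrow> nat \<Rightarrow> real"
  assumes z_sym: "\<And>i j. z j i = z i j"
    and L_bin: "\<And>i. 1 \<le> i \<Longrightarrow> i \<le> N \<Longrightarrow> L i \<in> {0, 1}"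
  shows "(\<Sum>i=1..N. if L i = 0 then energy_cap phi x psi z N (Src, U i) else 0) +
         (\<Sum>i=1..N. if L i = 1 then energy_cap phi x psi z N (U i, Snk) else 0) =
         (\<Sum>i=1..N. phi (x i) (L i)) +
         (\<Sum>(i, j)\<in>user_pairs N.
            ((if L i = 0 then 1/2 else 0) + (if L j = 0 then 1/2 else 0)) * psi (z i j) 0 0)"
proof -
  define w where "w i = (if L i = 0 then 1/2 else 0 :: real)" for i
  have "(\<Sum>i=1..N. if L i = 0 then energy_cap phi x psi z N (Src, U i) else 0) +
        (\<Sum>i=1..N. if L i = 1 then energy_cap phi x psi z N (U i, Snk) else 0) =
        (\<Sum>i=1..N. phi (x i) (L i)) + (\<Sum>i=1..N. \<Sum>j\<in>{1..N} - {i}. w i * psi (z i j) 0 0)"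
    unfolding sum.distrib[symmetric]
    by (rule sum.cong) (use L_bin in \<open>force simp: w_def sum_distrib_left\<close>)+
  also have "(\<Sum>i=1..N. \<Sum>j\<in>{1..N} - {i}. w i * psi (z i j) 0 0) =
             (\<Sum>(i, j)\<in>user_pairs N. (w i + w j) * psi (z i j) 0 0)"
    unfolding sum_off_diagonal_user_pairs by (simp add: z_sym distrib_right)
  finally show ?thesis
    by (simp add: w_def)
qed

lemma pair_energy_split:
  fixes f :: "nat \<Rightarrow> nat \<Rightarrow> real"
  assumes "a \<in> {0, 1}" "b \<in> {0, 1}"
    and related: "r \<Longrightarrow> f 1 1 = 0"
    and unrelated: "\<And>a' b'. \<not> r \<Longrightarrow> a' \<in> {0, 1} \<Longrightarrow> b' \<in> {0, 1} \<Longrightarrow> f a' b' = 0"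
  shows "f a b = ((if a = 0 then 1/2 else 0) + (if b = 0 then 1/2 else 0)) * f 0 0 +
                 (if r \<and> a = 1 \<and> b = 0 then f 1 0 - 1/2 * f 0 0 else 0) +
                 (if r \<and> a = 0 \<and> b = 1 then f 0 1 - 1/2 * f 0 0 else 0)"
proof (cases r)
  case True
  then show ?thesis using assms(1,2) related by auto
next
  case False
  then show ?thesis using assms(1,2) unrelated[OF False] by auto
qed

theorem lemma1:
  fixes N :: nat
    and phi :: "'x \<Rightarrow> nat \<Rightarrow> real" and x :: "nat \<Rightarrow> 'x"
    and psi :: "'z \<Rightarrow> nat \<Rightarrow> nat \<Rightarrow> real" and z :: "nat \<Rightarrow> nat \<Rightarrow> 'z"
    and rel :: "nat \<Rightarrow> nat \<Rightarrow> bool"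
    and L :: "nat \<Rightarrow> nat"
  assumes "N \<ge> 1"
    and z_sym: "\<And>i j. z j i = z i j"
    and no_rel: "\<And>i j a b. (i, j) \<in> user_pairs N \<Longrightarrow> \<not> rel i j \<Longrightarrow>
                   a \<in> {0, 1} \<Longrightarrow> b \<in> {0, 1} \<Longrightarrow> psi (z i j) a b = 0"
    and psi_cond: "\<And>i j. (i, j) \<in> user_pairs N \<Longrightarrow>
                   psi (z i j) 1 1 = 0 \<and> 0 \<le> psi (z i j) 0 0 \<and>
                   psi (z i j) 0 0 \<le> psi (z i j) 0 1 \<and> psi (z i j) 0 0 \<le> psi (z i j) 1 0"
    and L_bin: "\<And>i. 1 \<le> i \<Longrightarrow> i \<le> N \<Longrightarrow> L i \<in> {0, 1}"
  shows "energy phi x psi z N L =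
         cut_capacity (energy_edges N rel) (energy_cap phi x psi z N) (cut_S N L) (cut_T N L)"
proof -
  let ?c = "energy_cap phi x psi z N"
  have pair: "psi (z i j) (L i) (L j) =
      ((if L i = 0 then 1/2 else 0) + (if L j = 0 then 1/2 else 0)) * psi (z i j) 0 0 +
      (if rel i j \<and> L i = 1 \<and> L j = 0 then ?c (U i, U j) else 0) +
      (if rel i j \<and> L i = 0 \<and> L j = 1 then ?c (U j, U i) else 0)"
    if ij: "(i, j) \<in> user_pairs N" for i j
  proof -
    from ij have "i < j" "L i \<in> {0, 1}" "L j \<in> {0, 1}"
      using L_bin by (auto simp: user_pairs_def)
    with pair_energy_split[of "L i" "L j" "rel i j" "psi (z i j)"] psi_cond[OF ij] no_rel[OF ij]
    show ?thesis
      by simp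
  qed
  have "(\<Sum>(i, j)\<in>user_pairs N. psi (z i j) (L i) (L j)) =
        (\<Sum>(i, j)\<in>user_pairs N.
           ((if L i = 0 then 1/2 else 0) + (if L j = 0 then 1/2 else 0)) * psi (z i j) 0 0) +
        (\<Sum>(i, j)\<in>user_pairs N. if rel i j \<and> L i = 1 \<and> L j = 0 then ?c (U i, U j) else 0) +
        (\<Sum>(i, j)\<in>user_pairs N. if rel i j \<and> L i = 0 \<and> L j = 1 then ?c (U j, U i) else 0)"
    unfolding sum.distrib[symmetric] by (rule sum.cong) (auto simp: pair)
  then show ?thesis
    unfolding energy_def cut_capacity_configuration
    using source_sink_edges_capacity[of z N L phi x psi, OF z_sym L_bin] by simp
qed

end
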